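(* Let $n\ge1$, $\mu>0$, and consider $\min_{x\in\mathcal S^{n-1}} f(x)+\mu\|x\|_1$, where $\mathcal S^{n-1}=\{x\in\mathbb R^n:x^\top x=1\}$. Let $x^*$ be a local optimal solution and let $y^*\in\mathbb R^n$ satisfy $\Pi_{x^*}(\nabla f(x^* )+y^* )=0$ and $y^*\in\mu\partial\|x^*\|_1$. Then $$T_{x^*}\mathcal S^{n-1}+\mathcal C_{\theta,g_1}(x^*,y^* )=\mathbb R^n,$$ i.e. the M-SRCQ holds at $x^*$ with respect to $y^*$, and consequently $y^*$ is the unique vector satisfying these two conditions at $x^*$.
   Context: $f$ is a smooth function on an open set of $\mathbb R^n$ containing the unit sphere $\mathcal S^{n-1}$ (viewed as a Riemannian submanifold of $\mathbb R^n$), with Euclidean gradient $\nabla f$. $T_x\mathcal S^{n-1}=\{\xi:x^\top\xi=0\}$ and $\Pi_x(v)=v-xx^\top v$ is the orthogonal projection onto it. $\partial\|\cdot\|_1$ is the convex subdifferential. With $\theta=\mu\|\cdot\|_1$ and $g_1(x)=x$, $\theta^\downarrow(x;d)=\mu\sum_{x_i=0}|d_i|+\mu\sum_{x_i>0}d_i-\mu\sum_{x_i<0}d_i$ and $\mathcal C_{\theta,g_1}(x,y)=\{d\in\mathbb R^n:\theta^\downarrow(x;d)=\langle d,y\rangle\}$. *)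

theory Defs
  imports "HOL-Analysis.Analysis"
begin

text \<open>Vectors in R^n are modelled as real^'n (n = CARD('n) \<ge> 1).\<close>

definition l1norm :: "real^'n \<Rightarrow> real" where
  "l1norm x = (\<Sum>i\<in>UNIV. \<bar>x $ i\<bar>)"

definition subdiff :: "(real^'n \<Rightarrow> real) \<Rightarrow> real^'n \<Rightarrow> (real^'n) set" where
  "subdiff g x = {v. \<forall>z. g z \<ge> g x + v \<bullet> (z - x)}"

definition unit_sph :: "(real^'n) set" where
  "unit_sph = {x. x \<bullet> x = 1}"

definition tangent_sph :: "real^'n \<Rightarrow> (real^'n) set" where
  "tangent_sph x = {\<xi>. x \<bullet> \<xi> = 0}"

definition proj_tan :: "real^'n \<Rightarrow> real^'n \<Rightarrow> real^'n" where
  "proj_tan x v = v - (x \<bullet> v) *\<^sub>R x"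

text \<open>theta-down(x;d) for theta = mu * l1-norm.\<close>
definition theta_down :: "real \<Rightarrow> real^'n \<Rightarrow> real^'n \<Rightarrow> real" where
  "theta_down \<mu> x d =
     \<mu> * (\<Sum>i\<in>{i. x $ i = 0}. \<bar>d $ i\<bar>) + \<mu> * (\<Sum>i\<in>{i. x $ i > 0}. d $ i)
     - \<mu> * (\<Sum>i\<in>{i. x $ i < 0}. d $ i)"

definition crit_cone :: "real \<Rightarrow> real^'n \<Rightarrow> real^'n \<Rightarrow> (real^'n) set" where
  "crit_cone \<mu> x y = {d. theta_down \<mu> x d = d \<bullet> y}"

text \<open>Smoothness (C^infinity) on an open set U: f lies in a family of functions
  that are continuous on U and closed under taking partial derivatives on U,
  i.e. all partial derivatives of all orders exist on U and are continuous.\<close>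
definition smooth_on :: "(real^'n) set \<Rightarrow> (real^'n \<Rightarrow> real) \<Rightarrow> bool" where
  "smooth_on U f \<longleftrightarrow> (\<exists>S. f \<in> S \<and>
      (\<forall>g\<in>S. continuous_on U g) \<and>
      (\<forall>g\<in>S. \<forall>i. \<exists>h\<in>S. \<forall>x\<in>U.
          ((\<lambda>t. g (x + t *\<^sub>R axis i 1)) has_real_derivative h x) (at 0)))"

end

theory Submission
  imports Defs
begin

text \<open>A multiplier \<open>y \<in> \<mu> \<partial>\<parallel>x\<parallel>\<^sub>1\<close> is pinned down on the support of \<open>x\<close>, where it equals \<open>\<mu> sgn x\<close>.
  Hence \<open>\<theta>\<^sup>\<down>(x; \<cdot>)\<close> agrees with \<open>\<langle>\<cdot>, y\<rangle>\<close> on vectors supported in the support of \<open>x\<close>,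
  while vectors supported off the support of \<open>x\<close> are orthogonal to \<open>x\<close>, i.e. tangent;
  splitting an arbitrary direction along the support gives M-SRCQ.
  Uniqueness: stationarity makes two multipliers differ by a multiple of \<open>x\<close>, and they
  agree on a coordinate where \<open>x\<close> is nonzero, so that multiple is zero.\<close>

lemma l1norm_add_axis:
  "l1norm (x + t *\<^sub>R axis i 1) = l1norm x + \<bar>x $ i + t\<bar> - \<bar>x $ i\<bar>"
proof -
  have split_i: "sum g UNIV = g i + sum g (UNIV - {i})" for g :: "'a \<Rightarrow> real"
    by (simp add: sum.remove)
  have "(\<Sum>j\<in>UNIV - {i}. \<bar>(x + t *\<^sub>R axis i 1) $ j\<bar>) = (\<Sum>j\<in>UNIV - {i}. \<bar>x $ j\<bar>)"
    by (rule sum.cong) (auto simp: axis_def)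
  then show ?thesis
    unfolding l1norm_def
    using split_i[of "\<lambda>j. \<bar>(x + t *\<^sub>R axis i 1) $ j\<bar>"] split_i[of "\<lambda>j. \<bar>x $ j\<bar>"]
    by (simp add: axis_def add.commute)
qed

lemma subdiff_l1norm_nth:
  assumes "v \<in> subdiff l1norm x" and "x $ i \<noteq> 0"
  shows "v $ i = sgn (x $ i)"
proof -
  have subgrad: "v $ i * t \<le> \<bar>x $ i + t\<bar> - \<bar>x $ i\<bar>" for t
  proof -
    have "l1norm x + v \<bullet> (x + t *\<^sub>R axis i 1 - x) \<le> l1norm (x + t *\<^sub>R axis i 1)"
      using assms(1) unfolding subdiff_def by blast
    then show ?thesis
      by (simp add: l1norm_add_axis inner_axis mult.commute)
  qed
  have up: "v $ i * (x $ i / 2) \<le> \<bar>x $ i + x $ i / 2\<bar> - \<bar>x $ i\<bar>"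
    and down: "v $ i * (- x $ i / 2) \<le> \<bar>x $ i - x $ i / 2\<bar> - \<bar>x $ i\<bar>"
    using subgrad[of "x $ i / 2"] subgrad[of "- x $ i / 2"] by simp_all
  show ?thesis
  proof (cases "x $ i > 0")
    case True
    with up down have "v $ i * x $ i = 1 * x $ i" by auto
    with True show ?thesis by simp
  next
    case False
    with assms(2) have neg: "x $ i < 0" by simp
    with up down have "(v $ i + 1) * x $ i = 0" by (auto simp: algebra_simps)
    with neg show ?thesis by simp
  qed
qed

lemma scaled_subdiff_l1norm_nth:
  assumes "y \<in> (\<lambda>v. \<mu> *\<^sub>R v) ` subdiff l1norm x" and "x $ i \<noteq> 0"
  shows "y $ i = \<mu> * sgn (x $ i)"
  using assms subdiff_l1norm_nth by fastforce

lemma theta_down_eq_sum: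
  "theta_down \<mu> x d = (\<Sum>i\<in>UNIV. \<mu> * (if x $ i = 0 then \<bar>d $ i\<bar> else sgn (x $ i) * d $ i))"
proof -
  have filter: "(\<Sum>i\<in>{i. P i}. g i) = (\<Sum>i\<in>UNIV. if P i then g i else 0)"
    for P and g :: "'a \<Rightarrow> real"
    using sum.inter_filter[of UNIV g P] by simp
  show ?thesis
    unfolding theta_down_def filter sum_distrib_left sum.distrib [symmetric] sum_subtractf [symmetric]
    by (rule sum.cong) (auto simp: sgn_if)
qed

lemma crit_cone_if_supported:
  assumes y_supp: "\<And>i. x $ i \<noteq> 0 \<Longrightarrow> y $ i = \<mu> * sgn (x $ i)"
    and d_supp: "\<And>i. x $ i = 0 \<Longrightarrow> d $ i = 0"
  shows "d \<in> crit_cone \<mu> x y"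
proof -
  have "theta_down \<mu> x d = (\<Sum>i\<in>UNIV. d $ i * y $ i)"
    unfolding theta_down_eq_sum using y_supp d_supp by (intro sum.cong) auto
  then show ?thesis
    unfolding crit_cone_def by (simp add: inner_vec_def)
qed

lemma tangent_sph_plus_crit_cone:
  fixes x y :: "real^'n"
  assumes "\<And>i. x $ i \<noteq> 0 \<Longrightarrow> y $ i = \<mu> * sgn (x $ i)"
  shows "{a + b | a b. a \<in> tangent_sph x \<and> b \<in> crit_cone \<mu> x y} = UNIV"
proof (intro set_eqI iffI)
  fix v :: "real^'n"
  define a where "a = (\<chi> i. if x $ i = 0 then v $ i else 0)"
  define b where "b = (\<chi> i. if x $ i = 0 then 0 else v $ i)"
  have "v = a + b"
    unfolding a_def b_def by (simp add: vec_eq_iff)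
  moreover have "a \<in> tangent_sph x"
    unfolding tangent_sph_def a_def inner_vec_def by (simp add: sum.neutral)
  moreover have "b \<in> crit_cone \<mu> x y"
  proof (rule crit_cone_if_supported)
    show "y $ i = \<mu> * sgn (x $ i)" if "x $ i \<noteq> 0" for i
      using assms that .
    show "b $ i = 0" if "x $ i = 0" for i
      using that by (simp add: b_def)
  qed
  ultimately show "v \<in> {a + b | a b. a \<in> tangent_sph x \<and> b \<in> crit_cone \<mu> x y}"
    by blast
qed simp

lemma proj_tan_eq_0_iff: "proj_tan x v = 0 \<longleftrightarrow> v = (x \<bullet> v) *\<^sub>R x"
  unfolding proj_tan_def by simp

lemma stationary_multiplier_unique:
  assumes "x $ i \<noteq> 0"
    and "proj_tan x (g + y) = 0" and "proj_tan x (g + y') = 0"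
    and "y $ i = y' $ i"
  shows "y = y'"
proof -
  define k where "k = x \<bullet> (g + y) - x \<bullet> (g + y')"
  have "g + y = (x \<bullet> (g + y)) *\<^sub>R x" and "g + y' = (x \<bullet> (g + y')) *\<^sub>R x"
    using assms(2,3) unfolding proj_tan_eq_0_iff by simp_all
  then have diff: "y - y' = k *\<^sub>R x"
    unfolding k_def scaleR_left_diff_distrib by (metis add_diff_cancel_left)
  have "(y - y') $ i = 0"
    using assms(4) by simp
  then have "k * x $ i = 0"
    unfolding diff by simp
  with assms(1) have "k = 0" by simp
  with diff show ?thesis by simp
qed

lemma unit_sph_nonzero_coordinate:
  assumes "x \<in> unit_sph"
  obtains i where "x $ i \<noteq> 0"
proof -
  have "x \<noteq> 0" using assms unfolding unit_sph_def by auto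
  then show ?thesis using that by (metis vec_eq_iff zero_index)
qed

theorem proposition7:
  fixes f :: "real^'n \<Rightarrow> real" and gradf :: "real^'n \<Rightarrow> real^'n"
    and U :: "(real^'n) set" and \<mu> :: real and xs ys :: "real^'n"
  assumes U_open: "open U" and U_sph: "unit_sph \<subseteq> U"
    and f_smooth: "smooth_on U f"
    and f_grad: "\<forall>x\<in>U. (f has_derivative (\<lambda>h. gradf x \<bullet> h)) (at x)"
    and mu_pos: "\<mu> > 0"
    and xs_sph: "xs \<in> unit_sph"
    and xs_locmin: "\<exists>\<epsilon>>0. \<forall>x\<in>unit_sph. dist x xs < \<epsilon> \<longrightarrow>
                      f xs + \<mu> * l1norm xs \<le> f x + \<mu> * l1norm x"
    and ys_stat: "proj_tan xs (gradf xs + ys) = 0"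
    and ys_sub: "ys \<in> (\<lambda>v. \<mu> *\<^sub>R v) ` subdiff l1norm xs"
  shows "{a + b | a b. a \<in> tangent_sph xs \<and> b \<in> crit_cone \<mu> xs ys} = UNIV
       \<and> (\<forall>y. proj_tan xs (gradf xs + y) = 0 \<and> y \<in> (\<lambda>v. \<mu> *\<^sub>R v) ` subdiff l1norm xs
              \<longrightarrow> y = ys)"
proof (intro conjI allI impI)
  have ys_on_supp: "ys $ i = \<mu> * sgn (xs $ i)" if "xs $ i \<noteq> 0" for i
    using ys_sub that by (rule scaled_subdiff_l1norm_nth)
  then show "{a + b | a b. a \<in> tangent_sph xs \<and> b \<in> crit_cone \<mu> xs ys} = UNIV"
    by (rule tangent_sph_plus_crit_cone)
  fix y
  assume y: "proj_tan xs (gradf xs + y) = 0 \<and> y \<in> (\<lambda>v. \<mu> *\<^sub>R v) ` subdiff l1norm xs"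
  obtain i where i: "xs $ i \<noteq> 0"
    using xs_sph by (rule unit_sph_nonzero_coordinate)
  have "y $ i = ys $ i"
    using scaled_subdiff_l1norm_nth[of y \<mu> xs i] y i ys_on_supp by simp
  with i y ys_stat show "y = ys"
    using stationary_multiplier_unique by blast
qed

end
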